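(* There is a decreasing sequence $\kappa_m\ge\kappa^*:=\kappa^*(e_0)>0$ such that for every $m>j\ge3$, $$\rho_{k_j}<\sigma_m(\rho_{k_j})-\rho_{k_j}\kappa_m.$$ In particular, $\rho_{k_j}<\sigma_\infty(\rho_{k_j})-\rho_{k_j}\kappa^*$.
   Context: Ellipse with semi-axes $0<b\le a$, eccentricity $e_0=\sqrt{1-b^2/a^2}$ with $0<e_0<1$. For $0\le k<1$, $F(\varphi;k)=\int_0^\varphi(1-k^2\sin^2\tau)^{-1/2}d\tau$, $K(k)=F(\pi/2;k)$. For $\lambda\in(0,b)$, $k_\lambda=\sqrt{(a^2-b^2)/(a^2-\lambda^2)}$, $\omega_\lambda=F(\arcsin(\lambda/b);k_\lambda)/(2K(k_\lambda))$ (strictly increasing from $0$ to $1/2$); for $q\ge3$, $\omega_{\lambda_q}=1/q$ and $k_q=k_{\lambda_q}\in(e_0,1)$, strictly decreasing in $q$ with $k_q\to e_0$. $\rho_{k}=\mathrm{arcosh}(1/k)$. For $m>j\ge3$, $\sigma_m(\rho_{k_j})=\frac{2\pi}{4K(k_m)}\int_0^{\rho_{k_j}}\frac{dt}{\sqrt{1-k_m^2\cosh^2t}}$, and $\sigma_\infty(\rho_{k_j})=\frac{2\pi}{4K(e_0)}\int_0^{\rho_{k_j}}\frac{dt}{\sqrt{1-e_0^2\cosh^2t}}$. *)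

theory Defs
  imports "HOL-Analysis.Analysis"
begin

definition ellF :: "real \<Rightarrow> real \<Rightarrow> real" where
  "ellF phi k = integral {0..phi} (\<lambda>\<tau>. 1 / sqrt (1 - k\<^sup>2 * (sin \<tau>)\<^sup>2))"

definition ellK :: "real \<Rightarrow> real" where
  "ellK k = ellF (pi / 2) k"

definition k_lam :: "real \<Rightarrow> real \<Rightarrow> real \<Rightarrow> real" where
  "k_lam a b l = sqrt ((a\<^sup>2 - b\<^sup>2) / (a\<^sup>2 - l\<^sup>2))"

definition omega_lam :: "real \<Rightarrow> real \<Rightarrow> real \<Rightarrow> real" where
  "omega_lam a b l = ellF (arcsin (l / b)) (k_lam a b l) / (2 * ellK (k_lam a b l))"

definition lam_q :: "real \<Rightarrow> real \<Rightarrow> nat \<Rightarrow> real" where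
  "lam_q a b q = (THE l. 0 < l \<and> l < b \<and> omega_lam a b l = 1 / real q)"

definition k_q :: "real \<Rightarrow> real \<Rightarrow> nat \<Rightarrow> real" where
  "k_q a b q = k_lam a b (lam_q a b q)"

definition rho :: "real \<Rightarrow> real" where
  "rho k = arcosh (1 / k)"

text \<open>sigma with modulus kk: (2 pi / (4 K(kk))) * int_0^r dt / sqrt(1 - kk^2 cosh^2 t).
  sigma_m uses kk = k_m, sigma_infinity uses kk = e_0.\<close>
definition sigma :: "real \<Rightarrow> real \<Rightarrow> real" where
  "sigma kk r = 2 * pi / (4 * ellK kk) * integral {0..r} (\<lambda>t. 1 / sqrt (1 - kk\<^sup>2 * (cosh t)\<^sup>2))"

end

theory Submission
  imports Defs
begin

text \<open>With \<open>k' = sqrt (1 - k\<^sup>2)\<close>, the integrand of \<open>\<sigma>\<^sub>k\<close> is at least \<open>1/k'\<close> on \<open>[0, \<rho>]\<close> as long as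
  \<open>k cosh \<rho> < 1\<close>, so \<open>\<sigma>\<^sub>k(\<rho>) \<ge> \<rho> \<pi> / (2 K(k) k')\<close>. The product \<open>K(k) k'\<close> is decreasing in \<open>k\<close> and
  below \<open>\<pi>/2\<close> for \<open>0 < k < 1\<close>, so \<open>\<kappa>(k) = (\<pi> / (2 K(k) k') - 1) / 2\<close> is positive and increasing,
  and \<open>\<kappa>\<^sub>m = \<kappa>(k\<^sub>m)\<close>, \<open>\<kappa>\<^sup>* = \<kappa>(e\<^sub>0)\<close> work because \<open>e\<^sub>0 < k\<^sub>m < k\<^sub>j\<close> for \<open>m > j\<close>.

  The complementary
  identity \<open>F(\<phi>; k) + F(arctan (cot \<phi> / k'); k) = K(k)\<close> gives
  \<open>\<omega>\<^sub>\<lambda> = 1/2 - F(arcsin (e\<^sub>0/k); k) / (2 K(k))\<close> with \<open>k = k\<^sub>\<lambda>\<close>; since \<open>k\<^sub>\<lambda>\<close> increases with \<open>\<lambda>\<close>,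
  \<open>F(arcsin (e\<^sub>0/k); k)\<close> decreases and \<open>K(k)\<close> increases with \<open>k\<close>, \<open>\<omega>\<^sub>\<lambda>\<close> is strictly increasing. It is
  continuous, vanishes at \<open>\<lambda> = 0\<close> and exceeds \<open>1/3\<close> somewhere because \<open>K(k) \<ge> artanh k\<close> is
  unbounded, so \<open>\<omega>\<^sub>\<lambda> = 1/q\<close> has a unique solution \<open>\<lambda>\<^sub>q\<close>, decreasing in \<open>q\<close>.\<close>

definition ell_integrand :: "real \<Rightarrow> real \<Rightarrow> real" where
  "ell_integrand k t = 1 / sqrt (1 - k\<^sup>2 * (sin t)\<^sup>2)"

lemma ellF_eq_integral: "ellF phi k = integral {0..phi} (ell_integrand k)"
  unfolding ellF_def ell_integrand_def by simp

lemma ell_radicand_bounds: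
  fixes k t :: real
  assumes "\<bar>k\<bar> < 1"
  shows "0 < 1 - k\<^sup>2" "1 - k\<^sup>2 \<le> 1 - k\<^sup>2 * (sin t)\<^sup>2"
proof -
  show "0 < 1 - k\<^sup>2" using assms by (simp add: abs_square_less_1)
  have "(sin t)\<^sup>2 \<le> 1" by (simp add: abs_square_le_1)
  then show "1 - k\<^sup>2 \<le> 1 - k\<^sup>2 * (sin t)\<^sup>2" by (simp add: mult_left_le)
qed

lemma ell_radicand_pos: "\<bar>k::real\<bar> < 1 \<Longrightarrow> 0 < 1 - k\<^sup>2 * (sin t)\<^sup>2"
  using ell_radicand_bounds[of k] by (meson less_le_trans)

lemma continuous_on_ell_integrand_comp:
  fixes S :: "'a::t2_space set"
  assumes "continuous_on S kf" "continuous_on S pf" "\<And>x. x \<in> S \<Longrightarrow> \<bar>kf x\<bar> < 1"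
  shows "continuous_on S (\<lambda>x. ell_integrand (kf x) (pf x))"
proof -
  have "\<forall>x\<in>S. sqrt (1 - (kf x)\<^sup>2 * (sin (pf x))\<^sup>2) \<noteq> 0"
    using assms(3) ell_radicand_pos by (metis less_irrefl real_sqrt_eq_zero_cancel_iff)
  then show ?thesis
    unfolding ell_integrand_def by (intro continuous_intros assms)
qed

lemma continuous_on_ell_integrand: "\<bar>k\<bar> < 1 \<Longrightarrow> continuous_on S (ell_integrand k)"
  using continuous_on_ell_integrand_comp[of S "\<lambda>_. k" "\<lambda>t. t"] by simp

lemma ell_integrand_integrable: "\<bar>k\<bar> < 1 \<Longrightarrow> ell_integrand k integrable_on {a..b}"
  by (simp add: continuous_on_ell_integrand integrable_continuous_real)

lemma ell_integrand_ge_1: "\<bar>k\<bar> < 1 \<Longrightarrow> 1 \<le> ell_integrand k t"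
  using ell_radicand_pos[of k t] by (simp add: ell_integrand_def le_divide_eq)

lemma ellF_0 [simp]: "ellF 0 k = 0"
  unfolding ellF_def by simp

lemma ellF_ge: "\<bar>k\<bar> < 1 \<Longrightarrow> 0 \<le> phi \<Longrightarrow> phi \<le> ellF phi k"
  using integral_le[of "\<lambda>_. 1" "{0..phi}" "ell_integrand k"]
  by (simp add: ellF_eq_integral ell_integrand_integrable ell_integrand_ge_1 integrable_on_const)

lemma ellK_ge: "\<bar>k\<bar> < 1 \<Longrightarrow> pi / 2 \<le> ellK k"
  unfolding ellK_def by (rule ellF_ge) auto

lemma ellK_pos: "\<bar>k\<bar> < 1 \<Longrightarrow> 0 < ellK k"
  using ellK_ge[of k] pi_gt_zero by linarith

lemma continuous_on_ellF: "\<bar>k\<bar> < 1 \<Longrightarrow> continuous_on {0..b} (\<lambda>x. ellF x k)"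
  unfolding ellF_eq_integral
  by (rule indefinite_integral_continuous_1) (simp add: ell_integrand_integrable)

lemma has_real_derivative_ellF:
  assumes "\<bar>k\<bar> < 1" "0 < phi"
  shows "((\<lambda>x. ellF x k) has_real_derivative ell_integrand k phi) (at phi)"
proof -
  have "((\<lambda>x. integral {0..x} (ell_integrand k)) has_real_derivative ell_integrand k phi)
      (at phi within {0..phi+1})"
    using assms by (intro integral_has_real_derivative continuous_on_ell_integrand) auto
  moreover have "at phi within {0..phi+1} = at phi"
    using assms by (intro at_within_interior) auto
  ultimately show ?thesis unfolding ellF_eq_integral by simp
qed

text \<open>Rescaling to the fixed interval [0,1] turns continuity in the upper limit and the modulus
  into continuity of a parameter-dependent integral.\<close>
lemma continuous_on_ellF_joint:
  "continuous_on ({0..} \<times> {-1<..<1}) (\<lambda>z. ellF (fst z) (snd z))"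
proof -
  have rescale: "ellF phi k = phi * integral {0..1} (\<lambda>s. ell_integrand k (phi * s))"
    if "\<bar>k\<bar> < 1" "0 \<le> phi" for phi k
  proof (cases "phi = 0")
    case False
    then have "0 < phi" using that by simp
    have "(ell_integrand k has_integral ellF phi k) (cbox 0 phi)"
      using ell_integrand_integrable[OF that(1)] by (simp add: ellF_eq_integral integrable_integral)
    from has_integral_affinity'[OF this \<open>0 < phi\<close>, of 0]
    have "((\<lambda>s. ell_integrand k (phi * s)) has_integral ellF phi k /\<^sub>R phi) {0..1}"
      using \<open>0 < phi\<close> by simp
    then show ?thesis using \<open>0 < phi\<close> by (simp add: integral_unique)
  qed simp
  have "continuous_on ((UNIV \<times> {-1<..<1}) \<times> cbox 0 1)
      (\<lambda>(z, s). ell_integrand (snd z) (fst z * s))"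
    unfolding split_beta by (intro continuous_on_ell_integrand_comp continuous_intros) auto
  then have "continuous_on (UNIV \<times> {-1<..<1})
      (\<lambda>z. fst z * integral (cbox 0 1) (\<lambda>s. ell_integrand (snd z) (fst z * s)))"
    by (intro continuous_intros integral_continuous_on_param)
  from this[unfolded cbox_interval]
  have "continuous_on ({0..} \<times> {-1<..<1})
      (\<lambda>z. fst z * integral {0..1} (\<lambda>s. ell_integrand (snd z) (fst z * s)))"
    by (rule continuous_on_subset) auto
  then show ?thesis
    by (rule continuous_on_eq) (auto simp: rescale)
qed

lemma ellK_strict_mono:
  fixes k1 k2 :: real
  assumes "0 \<le> k1" "k1 < k2" "k2 < 1"
  shows "ellK k1 < ellK k2"
proof -
  have k: "\<bar>k1\<bar> < 1" "\<bar>k2\<bar> < 1" using assms by auto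
  have "integral {0..pi/2} (ell_integrand k1) < integral {0..pi/2} (ell_integrand k2)"
  proof (rule integral_less_real)
    show "continuous_on {0..pi/2} (ell_integrand k1)" "continuous_on {0..pi/2} (ell_integrand k2)"
      using k by (auto intro: continuous_on_ell_integrand)
    show "{0<..<pi/2} \<noteq> {}" using pi_gt_zero by (simp add: not_le)
    fix t :: real assume "t \<in> {0<..<pi/2}"
    then have "0 < sin t" by (intro sin_gt_zero) auto
    moreover have "k1\<^sup>2 < k2\<^sup>2" using assms by (simp add: power_strict_mono)
    ultimately have "k1\<^sup>2 * (sin t)\<^sup>2 < k2\<^sup>2 * (sin t)\<^sup>2" by simp
    then show "ell_integrand k1 t < ell_integrand k2 t"
      using ell_radicand_pos[OF k(2), of t]
      by (simp add: ell_integrand_def divide_strict_left_mono)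
  qed
  then show ?thesis by (simp add: ellK_def ellF_eq_integral)
qed

lemma ellK_mult_sqrt_antimono:
  fixes e k :: real
  assumes "0 \<le> e" "e \<le> k" "k < 1"
  shows "ellK k * sqrt (1 - k\<^sup>2) \<le> ellK e * sqrt (1 - e\<^sup>2)"
proof -
  have abs: "\<bar>k\<bar> < 1" "\<bar>e\<bar> < 1" using assms by auto
  have "integral {0..pi/2} (\<lambda>t. ell_integrand k t * sqrt (1 - k\<^sup>2))
      \<le> integral {0..pi/2} (\<lambda>t. ell_integrand e t * sqrt (1 - e\<^sup>2))"
  proof (rule integral_le)
    show "(\<lambda>t. ell_integrand k t * sqrt (1 - k\<^sup>2)) integrable_on {0..pi/2}"
      "(\<lambda>t. ell_integrand e t * sqrt (1 - e\<^sup>2)) integrable_on {0..pi/2}"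
      using abs by (auto intro: integrable_on_mult_left ell_integrand_integrable)
    fix t :: real
    define s where "s = (sin t)\<^sup>2"
    have s: "0 \<le> s" "s \<le> 1" unfolding s_def by (auto simp: abs_square_le_1)
    have pos: "0 < 1 - k\<^sup>2 * s" "0 < 1 - e\<^sup>2 * s"
      unfolding s_def using ell_radicand_pos abs by auto
    have "(1 - e\<^sup>2) * (1 - k\<^sup>2 * s) - (1 - k\<^sup>2) * (1 - e\<^sup>2 * s) = (k\<^sup>2 - e\<^sup>2) * (1 - s)"
      by (simp add: algebra_simps)
    moreover have "e\<^sup>2 \<le> k\<^sup>2" using assms by (simp add: power_mono)
    ultimately have "(1 - k\<^sup>2) * (1 - e\<^sup>2 * s) \<le> (1 - e\<^sup>2) * (1 - k\<^sup>2 * s)"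
      using s by (metis diff_ge_0_iff_ge mult_nonneg_nonneg)
    then have "sqrt (1 - k\<^sup>2) * sqrt (1 - e\<^sup>2 * s) \<le> sqrt (1 - e\<^sup>2) * sqrt (1 - k\<^sup>2 * s)"
      by (simp flip: real_sqrt_mult)
    then have "sqrt (1 - k\<^sup>2) / sqrt (1 - k\<^sup>2 * s) \<le> sqrt (1 - e\<^sup>2) / sqrt (1 - e\<^sup>2 * s)"
      using pos by (simp add: divide_le_eq le_divide_eq mult.commute mult.left_commute)
    then show "ell_integrand k t * sqrt (1 - k\<^sup>2) \<le> ell_integrand e t * sqrt (1 - e\<^sup>2)"
      unfolding ell_integrand_def s_def by simp
  qed
  then show ?thesis by (simp add: ellK_def ellF_eq_integral)
qed

lemma ellK_mult_sqrt_less_pi_half: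
  fixes e :: real
  assumes "0 < e" "e < 1"
  shows "ellK e * sqrt (1 - e\<^sup>2) < pi / 2"
proof -
  have abs: "\<bar>e\<bar> < 1" using assms by auto
  have "integral {0..pi/2} (\<lambda>t. ell_integrand e t * sqrt (1 - e\<^sup>2)) < integral {0..pi/2} (\<lambda>t. 1)"
  proof (rule integral_less_real)
    show "continuous_on {0..pi/2} (\<lambda>t. ell_integrand e t * sqrt (1 - e\<^sup>2))"
      using continuous_on_ell_integrand[OF abs] by (intro continuous_intros)
    show "continuous_on {0..pi/2} (\<lambda>t. 1::real)" "{0<..<pi/2} \<noteq> {}"
      using pi_gt_zero by (simp_all add: not_le)
    fix t :: real assume "t \<in> {0<..<pi/2}"
    then have "0 < cos t" by (intro cos_gt_zero) auto
    then have "(sin t)\<^sup>2 < 1" using sin_cos_squared_add[of t] by (smt (verit) zero_less_power)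
    then have "e\<^sup>2 * (sin t)\<^sup>2 < e\<^sup>2" using assms by simp
    then have "sqrt (1 - e\<^sup>2) < sqrt (1 - e\<^sup>2 * (sin t)\<^sup>2)" by simp
    then show "ell_integrand e t * sqrt (1 - e\<^sup>2) < 1"
      using ell_radicand_pos[OF abs, of t] by (simp add: ell_integrand_def divide_less_eq)
  qed
  then show ?thesis by (simp add: ellK_def ellF_eq_integral)
qed

text \<open>The integrand dominates \<open>cos t / (1 - k\<^sup>2 sin\<^sup>2 t)\<close>, whose integral is \<open>artanh k / k\<close>.\<close>
lemma artanh_le_ellK:
  fixes k :: real
  assumes k: "0 < k" "k < 1"
  shows "artanh k \<le> ellK k"
proof -
  have abs: "\<bar>k\<bar> < 1" using k by simp
  define f where "f = (\<lambda>t. cos t / (1 - k\<^sup>2 * (sin t)\<^sup>2))"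
  have "(f has_integral (artanh (k * sin (pi/2)) / k - artanh (k * sin 0) / k)) {0..pi/2}"
  proof (rule fundamental_theorem_of_calculus)
    fix x
    have "\<bar>k * sin x\<bar> \<le> k"
      using k abs_sin_le_one[of x] by (simp add: abs_mult mult_left_le)
    then have "\<bar>k * sin x\<bar> < 1" using k by simp
    then have "DERIV (\<lambda>t. artanh (k * sin t) / k) x :> 1 / (1 - (k * sin x)\<^sup>2) * (k * cos x) / k"
      by (intro DERIV_cdivide DERIV_chain2[OF artanh_real_has_field_derivative DERIV_cmult[OF DERIV_sin]])
    moreover have "1 / (1 - (k * sin x)\<^sup>2) * (k * cos x) / k = f x"
      unfolding f_def using k by (simp add: power_mult_distrib)
    ultimately show "((\<lambda>t. artanh (k * sin t) / k) has_vector_derivative f x) (at x within {0..pi/2})"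
      by (auto simp: has_real_derivative_iff_has_vector_derivative intro: has_vector_derivative_at_within)
  qed simp
  then have f_int: "(f has_integral artanh k / k) {0..pi/2}" by simp
  have "integral {0..pi/2} f \<le> integral {0..pi/2} (ell_integrand k)"
  proof (rule integral_le)
    show "f integrable_on {0..pi/2}" using f_int by blast
    show "ell_integrand k integrable_on {0..pi/2}" by (rule ell_integrand_integrable[OF abs])
    fix x assume x: "x \<in> {0..pi/2}"
    define u where "u = 1 - k\<^sup>2 * (sin x)\<^sup>2"
    have u: "0 < u" unfolding u_def by (rule ell_radicand_pos[OF abs])
    have "k\<^sup>2 * (sin x)\<^sup>2 \<le> (sin x)\<^sup>2" using k by (simp add: mult_left_le_one_le power_le_one)
    then have "(cos x)\<^sup>2 \<le> u" unfolding u_def using sin_cos_squared_add[of x] by linarith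
    then have "cos x \<le> sqrt u" by (rule real_le_rsqrt)
    then have "cos x / u \<le> sqrt u / u" using u by (simp add: divide_right_mono)
    also have "\<dots> = 1 / sqrt u" using u by (simp add: field_simps real_div_sqrt)
    finally show "f x \<le> ell_integrand k x" unfolding f_def ell_integrand_def u_def .
  qed
  then have "artanh k / k \<le> ellK k"
    using f_int by (simp add: integral_unique ellK_def ellF_eq_integral)
  moreover have "0 \<le> artanh k" using k by (simp add: artanh_def field_simps)
  then have "artanh k \<le> artanh k / k" using k by (simp add: le_divide_eq mult_left_le)
  ultimately show ?thesis by simp
qed

text \<open>For \<open>s = sin t\<close>, \<open>c = cos t\<close>, \<open>y = cot t / k'\<close>: the integrand at \<open>arctan y\<close> is \<open>D/k'\<close>, and the
  derivative of \<open>F(t; k) + F(arctan y; k)\<close> vanishes.\<close>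
lemma arctan_substitution_algebra:
  fixes k s c :: real
  assumes k: "0 \<le> k" "k < 1" and sc: "0 < s" "0 < c" "s\<^sup>2 + c\<^sup>2 = 1"
  defines "kp \<equiv> sqrt (1 - k\<^sup>2)" and "D \<equiv> sqrt (1 - k\<^sup>2 * s\<^sup>2)" and "y \<equiv> c / (sqrt (1 - k\<^sup>2) * s)"
  shows "1 / sqrt (1 - k\<^sup>2 * (y / sqrt (1 + y\<^sup>2))\<^sup>2) = D / kp"
    and "1 / D + (D / kp) * (inverse (1 + y\<^sup>2) * (- 1 / (kp * s\<^sup>2))) = 0"
proof -
  have k2: "k\<^sup>2 < 1" using k by (simp add: abs_square_less_1)
  have kp2: "kp\<^sup>2 = 1 - k\<^sup>2" and kp: "0 < kp" using k2 by (simp_all add: kp_def)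
  have "s\<^sup>2 \<le> 1" using sc(3) by (metis le_add_same_cancel1 zero_le_power2)
  then have "k\<^sup>2 * s\<^sup>2 \<le> k\<^sup>2" by (simp add: mult_left_le)
  then have D2: "D\<^sup>2 = 1 - k\<^sup>2 * s\<^sup>2" and D: "0 < D" using k2 by (simp_all add: D_def)
  have y2: "y\<^sup>2 = c\<^sup>2 / (kp\<^sup>2 * s\<^sup>2)"
    by (simp add: y_def power_divide power_mult_distrib flip: kp_def)
  have sum: "kp\<^sup>2 * s\<^sup>2 + c\<^sup>2 = D\<^sup>2"
    unfolding kp2 D2 using sc(3) by (simp add: algebra_simps)
  have key: "1 + y\<^sup>2 = D\<^sup>2 / (kp\<^sup>2 * s\<^sup>2)"
    unfolding y2 sum[symmetric] using kp sc(1) by (simp add: add_divide_distrib)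
  have "(y / sqrt (1 + y\<^sup>2))\<^sup>2 = y\<^sup>2 / (1 + y\<^sup>2)"
    by (simp add: power_divide add_pos_nonneg)
  also have "\<dots> = c\<^sup>2 / D\<^sup>2" unfolding key y2 using kp sc(1) D sum by (simp add: field_simps)
  finally have "1 - k\<^sup>2 * (y / sqrt (1 + y\<^sup>2))\<^sup>2 = 1 - k\<^sup>2 * (c\<^sup>2 / D\<^sup>2)"
    by simp
  also have "\<dots> = (D\<^sup>2 - k\<^sup>2 * c\<^sup>2) / D\<^sup>2"
    using D by (simp add: field_simps)
  also have "D\<^sup>2 - k\<^sup>2 * c\<^sup>2 = kp\<^sup>2"
  proof -
    have "k\<^sup>2 * s\<^sup>2 + k\<^sup>2 * c\<^sup>2 = k\<^sup>2" using sc(3) by (metis distrib_left mult.right_neutral)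
    then show ?thesis unfolding D2 kp2 by linarith
  qed
  finally have "sqrt (1 - k\<^sup>2 * (y / sqrt (1 + y\<^sup>2))\<^sup>2) = kp / D"
    using kp D by (simp add: power_divide real_sqrt_divide)
  then show "1 / sqrt (1 - k\<^sup>2 * (y / sqrt (1 + y\<^sup>2))\<^sup>2) = D / kp" by simp
  have inv: "inverse (1 + y\<^sup>2) = kp\<^sup>2 * s\<^sup>2 / D\<^sup>2" unfolding key by simp
  show "1 / D + (D / kp) * (inverse (1 + y\<^sup>2) * (- 1 / (kp * s\<^sup>2))) = 0"
    unfolding inv using kp sc(1) D by (simp add: field_simps power2_eq_square)
qed

lemma ellF_complement_has_derivative_0:
  fixes k t :: real
  assumes k: "0 \<le> k" "k < 1" and t: "0 < t" "t < pi/2"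
  shows "((\<lambda>t. ellF t k + ellF (arctan (cos t / (sqrt (1 - k\<^sup>2) * sin t))) k)
           has_real_derivative 0) (at t)"
proof -
  define kp where "kp = sqrt (1 - k\<^sup>2)"
  define y where "y = (\<lambda>t. cos t / (kp * sin t))"
  have abs: "\<bar>k\<bar> < 1" using k by simp
  have kp: "0 < kp" using ell_radicand_bounds(1)[OF abs] by (simp add: kp_def)
  have s: "0 < sin t" using t by (intro sin_gt_zero) auto
  have c: "0 < cos t" using t by (intro cos_gt_zero) auto
  have "DERIV y t :> ((- sin t) * (kp * sin t) - (kp * cos t) * cos t) / (kp * sin t)\<^sup>2"
    unfolding y_def power2_eq_square using s kp
    by (auto intro!: derivative_eq_intros simp: power2_eq_square)
  also have "(- sin t) * (kp * sin t) - (kp * cos t) * cos t = - kp * ((sin t)\<^sup>2 + (cos t)\<^sup>2)"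
    unfolding power2_eq_square by algebra
  also have "- kp * ((sin t)\<^sup>2 + (cos t)\<^sup>2) / (kp * sin t)\<^sup>2 = - 1 / (kp * (sin t)\<^sup>2)"
    using s kp by simp (simp add: field_simps power2_eq_square)
  finally have dy: "DERIV y t :> - 1 / (kp * (sin t)\<^sup>2)" .
  have "0 < y t" unfolding y_def using s c kp by simp
  then have "0 < arctan (y t)" by (simp add: arctan_less_iff[of 0, simplified])
  from DERIV_chain2[OF has_real_derivative_ellF[OF abs this] DERIV_chain2[OF DERIV_arctan dy]]
  have "DERIV (\<lambda>t. ellF (arctan (y t)) k) t :>
      ell_integrand k (arctan (y t)) * (inverse (1 + (y t)\<^sup>2) * (- 1 / (kp * (sin t)\<^sup>2)))" .
  from DERIV_add[OF has_real_derivative_ellF[OF abs t(1)] this]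
  have "DERIV (\<lambda>t. ellF t k + ellF (arctan (y t)) k) t :>
      ell_integrand k t + ell_integrand k (arctan (y t)) * (inverse (1 + (y t)\<^sup>2) * (- 1 / (kp * (sin t)\<^sup>2)))" .
  moreover have "ell_integrand k t + ell_integrand k (arctan (y t)) * (inverse (1 + (y t)\<^sup>2) * (- 1 / (kp * (sin t)\<^sup>2))) = 0"
    using arctan_substitution_algebra[OF k s c sin_cos_squared_add]
    by (simp add: ell_integrand_def sin_arctan y_def kp_def)
  ultimately show ?thesis by (simp add: y_def kp_def)
qed

lemma ellF_complement:
  fixes k x :: real
  assumes k: "0 \<le> k" "k < 1" and x: "0 < x" "x \<le> pi/2"
  shows "ellF x k + ellF (arctan (cos x / (sqrt (1 - k\<^sup>2) * sin x))) k = ellK k"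
proof (cases "x = pi/2")
  case True
  show ?thesis unfolding True by (simp add: ellK_def)
next
  case False
  define G where "G = (\<lambda>t. ellF t k + ellF (arctan (cos t / (sqrt (1 - k\<^sup>2) * sin t))) k)"
  have abs: "\<bar>k\<bar> < 1" using k by simp
  have kp: "0 < sqrt (1 - k\<^sup>2)" using ell_radicand_bounds(1)[OF abs] by simp
  have sin_pos: "0 < sin t" if "t \<in> {x..pi/2}" for t
    using that x by (intro sin_gt_zero) auto
  have "continuous_on {x..pi/2} G"
  proof -
    have "sqrt (1 - k\<^sup>2) * sin t \<noteq> 0" if "t \<in> {x..pi/2}" for t
      using sin_pos[OF that] kp by simp
    then have "continuous_on {x..pi/2} (\<lambda>t. arctan (cos t / (sqrt (1 - k\<^sup>2) * sin t)))"
      by (intro continuous_intros ballI)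
    moreover have "(\<lambda>t. arctan (cos t / (sqrt (1 - k\<^sup>2) * sin t))) ` {x..pi/2} \<subseteq> {0..pi/2}"
    proof clarify
      fix t assume t: "t \<in> {x..pi/2}"
      then have "0 \<le> cos t" using x by (intro cos_ge_zero) auto
      then have "0 \<le> cos t / (sqrt (1 - k\<^sup>2) * sin t)" using sin_pos[OF t] kp by simp
      then show "arctan (cos t / (sqrt (1 - k\<^sup>2) * sin t)) \<in> {0..pi/2}"
        using arctan_ubound less_imp_le by (auto simp: arctan_le_iff[of 0, simplified])
    qed
    ultimately have "continuous_on {x..pi/2} (\<lambda>t. ellF (arctan (cos t / (sqrt (1 - k\<^sup>2) * sin t))) k)"
      by (rule continuous_on_compose2[OF continuous_on_ellF[OF abs]])
    moreover have "continuous_on {x..pi/2} (\<lambda>t. ellF t k)"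
      by (rule continuous_on_subset[OF continuous_on_ellF[OF abs, of "pi/2"]]) (use x in auto)
    ultimately show ?thesis unfolding G_def by (intro continuous_intros)
  qed
  moreover have "DERIV G t :> 0" if "x < t" "t < pi/2" for t
    unfolding G_def using k that x by (intro ellF_complement_has_derivative_0) auto
  ultimately have "G (pi/2) = G x" using False x by (intro DERIV_isconst_end) auto
  then show ?thesis by (simp add: G_def ellK_def)
qed

lemma arcsin_scaled_sin_derivative_le_1:
  fixes c x :: real
  assumes "0 \<le> c" "c \<le> 1" "0 \<le> cos x" "c * sin x < 1" "- 1 < c * sin x"
  shows "inverse (sqrt (1 - (c * sin x)\<^sup>2)) * (c * cos x) \<le> 1"
proof -
  have "(c * cos x)\<^sup>2 + (c * sin x)\<^sup>2 = c\<^sup>2"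
    by (metis distrib_left mult.right_neutral power_mult_distrib sin_cos_squared_add2)
  then have "(c * cos x)\<^sup>2 \<le> 1 - (c * sin x)\<^sup>2"
    using assms by (smt (verit) power_le_one)
  then have "c * cos x \<le> sqrt (1 - (c * sin x)\<^sup>2)" by (rule real_le_rsqrt)
  moreover have "0 < 1 - (c * sin x)\<^sup>2" using assms by (simp add: abs_square_less_1)
  ultimately show ?thesis by (simp add: field_simps)
qed

text \<open>After the substitution \<open>sin \<psi> = (k\<^sub>1/k\<^sub>2) sin \<phi>\<close> the left-hand side becomes an integral of
  the \<open>k\<^sub>1\<close>-integrand against a factor at most 1, over the same range as the right-hand side.\<close>
lemma ellF_arcsin_antimono:
  fixes e k1 k2 :: real
  assumes e: "0 < e" "e \<le> k1" and k: "k1 < k2" "k2 < 1"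
  shows "ellF (arcsin (e / k2)) k2 \<le> ellF (arcsin (e / k1)) k1"
proof -
  define c where "c = k1 / k2"
  have c: "0 < c" "c < 1" "k2 * c = k1" using e k by (auto simp: c_def)
  have abs: "\<bar>k1\<bar> < 1" "\<bar>k2\<bar> < 1" using e k by auto
  define al where "al = arcsin (e / k1)"
  have ek: "0 < e / k1" "e / k1 \<le> 1" using e by auto
  then have al: "0 < al" "al \<le> pi/2"
    unfolding al_def using arcsin_less_mono[of 0 "e/k1"] arcsin_ubound[of "e/k1"] by auto
  have cs: "0 \<le> c * sin x" "c * sin x < 1" if "x \<in> {0..al}" for x
  proof -
    have "0 \<le> sin x" using that al by (intro sin_ge_zero) auto
    then show "0 \<le> c * sin x" using c by simp
    have "c * sin x \<le> c" using c by (simp add: mult_left_le)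
    then show "c * sin x < 1" using c by linarith
  qed
  define P where "P = (\<lambda>x. ellF (arcsin (c * sin x)) k2 - ellF x k1)"
  have "P al \<le> P 0"
  proof (rule DERIV_nonpos_imp_decreasing_open[of 0 al P])
    fix x assume x: "0 < x" "x < al"
    then have "0 < sin x" using al by (intro sin_gt_zero) auto
    then have cs_pos: "0 < c * sin x" using c by simp
    have d_arcsin: "DERIV (\<lambda>x. arcsin (c * sin x)) x :> inverse (sqrt (1 - (c * sin x)\<^sup>2)) * (c * cos x)"
      using cs[of x] x by (intro DERIV_chain2[OF DERIV_arcsin DERIV_cmult[OF DERIV_sin]]) auto
    have "0 < arcsin (c * sin x)" using cs_pos arcsin_less_mono[of 0 "c * sin x"] cs[of x] x by auto
    from DERIV_diff[OF DERIV_chain2[OF has_real_derivative_ellF[OF abs(2) this] d_arcsin]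
        has_real_derivative_ellF[OF abs(1) x(1)]]
    have "DERIV P x :> ell_integrand k2 (arcsin (c * sin x))
        * (inverse (sqrt (1 - (c * sin x)\<^sup>2)) * (c * cos x)) - ell_integrand k1 x"
      unfolding P_def .
    moreover have "ell_integrand k2 (arcsin (c * sin x)) = ell_integrand k1 x"
      using cs[of x] x c(3) by (simp add: ell_integrand_def power_mult_distrib flip: mult.assoc power_mult_distrib)
    moreover have "inverse (sqrt (1 - (c * sin x)\<^sup>2)) * (c * cos x) \<le> 1"
      using c cs[of x] x al by (intro arcsin_scaled_sin_derivative_le_1 cos_ge_zero) auto
    moreover have "0 \<le> ell_integrand k1 x" using ell_integrand_ge_1[OF abs(1), of x] by simp
    ultimately show "\<exists>y. DERIV P x :> y \<and> y \<le> 0"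
      by (metis diff_le_0_iff_le mult_left_le)
  next
    have "- 1 \<le> c * sin x \<and> c * sin x \<le> 1" if "x \<in> {0..al}" for x
      using cs[OF that] by linarith
    then have "continuous_on {0..al} (\<lambda>x. arcsin (c * sin x))"
      by (intro continuous_on_arcsin continuous_intros ballI)
    moreover have "arcsin (c * sin x) \<in> {0..pi/2}" if "x \<in> {0..al}" for x
      using cs[OF that] arcsin_le_mono[of 0 "c * sin x"] arcsin_ubound[of "c * sin x"] by simp
    then have "(\<lambda>x. arcsin (c * sin x)) ` {0..al} \<subseteq> {0..pi/2}" by blast
    ultimately have "continuous_on {0..al} (\<lambda>x. ellF (arcsin (c * sin x)) k2)"
      by (rule continuous_on_compose2[OF continuous_on_ellF[OF abs(2)]])
    then show "continuous_on {0..al} P"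
      unfolding P_def using continuous_on_ellF[OF abs(1)] by (intro continuous_intros)
  qed (use al in simp)
  moreover have "sin al = e / k1" using ek by (simp add: al_def)
  then have "c * sin al = e / k2" using e by (simp add: c_def)
  ultimately show ?thesis by (simp add: P_def al_def)
qed

lemma eccentricity_bounds:
  fixes a b :: real
  assumes "0 < b" "b < a"
  shows "0 < sqrt (1 - b\<^sup>2 / a\<^sup>2)" "sqrt (1 - b\<^sup>2 / a\<^sup>2) < 1"
proof -
  have "b\<^sup>2 < a\<^sup>2" using assms by (simp add: power_strict_mono)
  then show "0 < sqrt (1 - b\<^sup>2 / a\<^sup>2)" "sqrt (1 - b\<^sup>2 / a\<^sup>2) < 1"
    using assms by simp_all
qed

lemma k_lam_bounds:
  fixes a b l :: real
  assumes "0 < b" "b < a" "0 \<le> l" "l < b"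
  shows "(k_lam a b l)\<^sup>2 = (a\<^sup>2 - b\<^sup>2) / (a\<^sup>2 - l\<^sup>2)" "0 < k_lam a b l" "k_lam a b l < 1"
proof -
  have "l\<^sup>2 < b\<^sup>2" "b\<^sup>2 < a\<^sup>2" using assms by (simp_all add: power_strict_mono)
  then have "0 < (a\<^sup>2 - b\<^sup>2) / (a\<^sup>2 - l\<^sup>2)" "(a\<^sup>2 - b\<^sup>2) / (a\<^sup>2 - l\<^sup>2) < 1" by simp_all
  then show "(k_lam a b l)\<^sup>2 = (a\<^sup>2 - b\<^sup>2) / (a\<^sup>2 - l\<^sup>2)" "0 < k_lam a b l" "k_lam a b l < 1"
    unfolding k_lam_def by simp_all
qed

lemma k_lam_strict_mono:
  fixes a b l1 l2 :: real
  assumes "0 < b" "b < a" "0 \<le> l1" "l1 < l2" "l2 < b"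
  shows "k_lam a b l1 < k_lam a b l2"
proof -
  have "l1\<^sup>2 < l2\<^sup>2" "l2\<^sup>2 < b\<^sup>2" "b\<^sup>2 < a\<^sup>2" using assms by (simp_all add: power_strict_mono)
  then have "(a\<^sup>2 - b\<^sup>2) / (a\<^sup>2 - l1\<^sup>2) < (a\<^sup>2 - b\<^sup>2) / (a\<^sup>2 - l2\<^sup>2)"
    by (intro divide_strict_left_mono) auto
  then show ?thesis unfolding k_lam_def by simp
qed

lemma eccentricity_less_k_lam:
  fixes a b l :: real
  assumes "0 < b" "b < a" "0 < l" "l < b"
  shows "sqrt (1 - b\<^sup>2 / a\<^sup>2) < k_lam a b l"
proof -
  have "k_lam a b 0 = sqrt (1 - b\<^sup>2 / a\<^sup>2)"
    using assms unfolding k_lam_def by (simp add: diff_divide_distrib)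
  then show ?thesis using k_lam_strict_mono[of b a 0 l] assms by simp
qed

lemma k_lam_surj:
  fixes a b k :: real
  assumes "0 < b" "b < a" "sqrt (1 - b\<^sup>2 / a\<^sup>2) < k" "k < 1"
  shows "\<exists>l. 0 < l \<and> l < b \<and> k_lam a b l = k"
proof -
  define L where "L = a\<^sup>2 - (a\<^sup>2 - b\<^sup>2) / k\<^sup>2"
  have ba: "b\<^sup>2 < a\<^sup>2" using assms by (simp add: power_strict_mono)
  have k: "0 < k" using eccentricity_bounds assms by (meson less_trans)
  have "(sqrt (1 - b\<^sup>2 / a\<^sup>2))\<^sup>2 < k\<^sup>2"
    using assms(3) eccentricity_bounds[OF assms(1,2)] by (intro power_strict_mono) auto
  moreover have "b\<^sup>2 / a\<^sup>2 < 1" using ba by (simp add: divide_less_eq_1)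
  ultimately have "1 - b\<^sup>2 / a\<^sup>2 < k\<^sup>2" by simp
  then have "a\<^sup>2 - b\<^sup>2 < k\<^sup>2 * a\<^sup>2" using assms by (simp add: field_simps)
  then have L_pos: "0 < L" using k by (simp add: L_def field_simps)
  have "k\<^sup>2 < 1" using assms k by (simp add: power_less_one_iff)
  then have "(a\<^sup>2 - b\<^sup>2) * k\<^sup>2 < a\<^sup>2 - b\<^sup>2" using ba by (simp add: mult_less_cancel_left1)
  then have L_less: "L < b\<^sup>2" using k by (simp add: L_def field_simps)
  have "(a\<^sup>2 - b\<^sup>2) / (a\<^sup>2 - (sqrt L)\<^sup>2) = k\<^sup>2" using L_pos ba k by (simp add: L_def)
  then have "k_lam a b (sqrt L) = k" unfolding k_lam_def using k by simp
  moreover have "0 < sqrt L" "sqrt L < b"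
    using L_pos L_less assms real_sqrt_less_mono[OF L_less] by auto
  ultimately show ?thesis by blast
qed

lemma arcsin_eccentricity_ratio:
  fixes a b l :: real
  assumes ab: "0 < b" "b < a" and l: "0 < l" "l < b"
  defines "k \<equiv> k_lam a b l"
  shows "arcsin (sqrt (1 - b\<^sup>2 / a\<^sup>2) / k)
    = arctan (cos (arcsin (l / b)) / (sqrt (1 - k\<^sup>2) * sin (arcsin (l / b))))"
proof -
  define y where "y = cos (arcsin (l / b)) / (sqrt (1 - k\<^sup>2) * sin (arcsin (l / b)))"
  have k2: "k\<^sup>2 = (a\<^sup>2 - b\<^sup>2) / (a\<^sup>2 - l\<^sup>2)" "0 < k" "k < 1"
    using k_lam_bounds[of b a l] ab l by (auto simp: k_def)
  have sq: "l\<^sup>2 < b\<^sup>2" "b\<^sup>2 < a\<^sup>2" using ab l by (simp_all add: power_strict_mono)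
  have lb: "0 < l / b" "l / b < 1" using ab l by auto
  have c2: "(cos (arcsin (l / b)))\<^sup>2 = (b\<^sup>2 - l\<^sup>2) / b\<^sup>2"
    using lb ab by (simp add: cos_arcsin power_divide field_simps)
  have k_sq: "k\<^sup>2 < 1" using k2(2,3) by (simp add: abs_square_less_1)
  then have kp2: "(sqrt (1 - k\<^sup>2))\<^sup>2 = (b\<^sup>2 - l\<^sup>2) / (a\<^sup>2 - l\<^sup>2)"
    using sq by (simp add: k2(1) field_simps)
  have "y\<^sup>2 = ((b\<^sup>2 - l\<^sup>2) / b\<^sup>2) / ((b\<^sup>2 - l\<^sup>2) / (a\<^sup>2 - l\<^sup>2) * (l\<^sup>2 / b\<^sup>2))"
    unfolding y_def power_divide power_mult_distrib c2 kp2 using lb by (simp add: power_divide)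
  also have "\<dots> = (a\<^sup>2 - l\<^sup>2) / l\<^sup>2"
  proof -
    have "((B - L) / B) / ((B - L) / (A - L) * (L / B)) = (A - L) / L"
      if "B - L \<noteq> 0" "A - L \<noteq> 0" "B \<noteq> 0" "L \<noteq> 0" for A B L :: real
      using that by (simp add: field_simps)
    then show ?thesis using sq l by simp
  qed
  finally have y2: "y\<^sup>2 = (a\<^sup>2 - l\<^sup>2) / l\<^sup>2" .
  then have one_plus_y2: "1 + y\<^sup>2 = a\<^sup>2 / l\<^sup>2" using l by (simp add: field_simps)
  have "(sin (arctan y))\<^sup>2 = y\<^sup>2 / (1 + y\<^sup>2)"
    by (simp add: sin_arctan power_divide add_pos_nonneg)
  also have "\<dots> = (a\<^sup>2 - l\<^sup>2) / a\<^sup>2"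
    unfolding one_plus_y2 y2 using ab l by (simp add: field_simps)
  also have "\<dots> = (sqrt (1 - b\<^sup>2 / a\<^sup>2) / k)\<^sup>2"
  proof -
    have "(A - L) / A = (1 - B / A) / ((A - B) / (A - L))"
      if "A - B \<noteq> 0" "A - L \<noteq> 0" "A \<noteq> 0" for A B L :: real
      using that by (simp add: field_simps)
    moreover have "b\<^sup>2 / a\<^sup>2 \<le> 1" using sq by (simp add: divide_le_eq_1)
    ultimately show ?thesis using sq ab by (simp add: power_divide k2(1))
  qed
  finally have "sin (arctan y) = sqrt (1 - b\<^sup>2 / a\<^sup>2) / k"
  proof (rule power2_eq_imp_eq)
    have "0 < cos (arcsin (l / b))" using lb by (simp add: cos_arcsin abs_square_less_1)
    moreover have "0 < sqrt (1 - k\<^sup>2)" using k_sq by simp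
    moreover have "0 < sin (arcsin (l / b))" using lb by simp
    ultimately have "0 < y" unfolding y_def by (intro divide_pos_pos mult_pos_pos)
    then show "0 \<le> sin (arctan y)" by (simp add: sin_arctan)
  qed (use k2 eccentricity_bounds[OF ab] in simp)
  then show ?thesis
    using arcsin_sin[of "arctan y"] arctan_bounded[of y] by (auto simp: y_def)
qed

lemma omega_lam_complement:
  fixes a b l :: real
  assumes ab: "0 < b" "b < a" and l: "0 < l" "l < b"
  defines "k \<equiv> k_lam a b l"
  shows "omega_lam a b l = 1/2 - ellF (arcsin (sqrt (1 - b\<^sup>2 / a\<^sup>2) / k)) k / (2 * ellK k)"
proof -
  have k: "0 < k" "k < 1" using k_lam_bounds[of b a l] ab l by (auto simp: k_def)
  have "0 < l / b" "l / b < 1" using ab l by auto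
  then have "0 < arcsin (l / b)" "arcsin (l / b) \<le> pi/2"
    using arcsin_less_mono[of 0 "l/b"] arcsin_ubound[of "l/b"] by auto
  from ellF_complement[OF _ k(2) this] k
  have "ellF (arcsin (l / b)) k = ellK k - ellF (arcsin (sqrt (1 - b\<^sup>2 / a\<^sup>2) / k)) k"
    using arcsin_eccentricity_ratio[OF ab l] by (simp add: k_def)
  moreover have "0 < ellK k" using k by (intro ellK_pos) simp
  ultimately show ?thesis by (simp add: omega_lam_def k_def[symmetric] field_simps)
qed

lemma omega_lam_strict_mono:
  fixes a b l1 l2 :: real
  assumes ab: "0 < b" "b < a" and l: "0 < l1" "l1 < l2" "l2 < b"
  shows "omega_lam a b l1 < omega_lam a b l2"
proof -
  define e where "e = sqrt (1 - b\<^sup>2 / a\<^sup>2)"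
  define k1 where "k1 = k_lam a b l1"
  define k2 where "k2 = k_lam a b l2"
  have e: "0 < e" using eccentricity_bounds[OF ab] by (simp add: e_def)
  have k: "e < k1" "k1 < k2" "k2 < 1"
    using eccentricity_less_k_lam[OF ab, of l1] k_lam_strict_mono[OF ab, of l1 l2]
      k_lam_bounds[OF ab, of l2] l by (simp_all add: e_def k1_def k2_def)
  define N1 where "N1 = ellF (arcsin (e / k1)) k1"
  define N2 where "N2 = ellF (arcsin (e / k2)) k2"
  have "N2 \<le> N1" unfolding N1_def N2_def using e k by (intro ellF_arcsin_antimono) auto
  moreover have "0 < ellK k1" "ellK k1 < ellK k2"
    using e k by (auto intro: ellK_pos ellK_strict_mono)
  moreover have "0 < N1"
  proof -
    have "0 < arcsin (e / k1)" using e k arcsin_less_mono[of 0 "e / k1"] by simp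
    also have "arcsin (e / k1) \<le> N1"
      unfolding N1_def using e k calculation by (intro ellF_ge) auto
    finally show ?thesis .
  qed
  ultimately have "N2 / ellK k2 < N1 / ellK k1"
    by (smt (verit) divide_right_mono divide_strict_left_mono mult_pos_pos)
  then show ?thesis
    using omega_lam_complement[OF ab, of l1] omega_lam_complement[OF ab, of l2] l
    by (simp add: N1_def N2_def e_def k1_def k2_def)
qed

lemma continuous_on_omega_lam:
  fixes a b :: real
  assumes ab: "0 < b" "b < a"
  shows "continuous_on {0..<b} (omega_lam a b)"
proof -
  have k: "- 1 < k_lam a b l \<and> k_lam a b l < 1" if "l \<in> {0..<b}" for l
    using k_lam_bounds[OF ab, of l] that by auto
  have "a\<^sup>2 - l\<^sup>2 \<noteq> 0" if "l \<in> {0..<b}" for l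
    using that ab power_strict_mono[of l a 2] by auto
  then have ck: "continuous_on {0..<b} (k_lam a b)"
    unfolding k_lam_def[abs_def] by (intro continuous_intros ballI)
  have cont: "continuous_on {0..<b} (\<lambda>l. ellF (phi l) (k_lam a b l))"
    if "continuous_on {0..<b} phi" "\<And>l. l \<in> {0..<b} \<Longrightarrow> 0 \<le> phi l" for phi
  proof -
    have "continuous_on {0..<b} (\<lambda>l. (phi l, k_lam a b l))"
      using that(1) ck by (rule continuous_on_Pair)
    moreover have "(\<lambda>l. (phi l, k_lam a b l)) ` {0..<b} \<subseteq> {0..} \<times> {-1<..<1}"
      using k that(2) by auto
    ultimately show ?thesis
      using continuous_on_compose2[OF continuous_on_ellF_joint] by fastforce
  qed
  have "continuous_on {0..<b} (\<lambda>l. ellF (arcsin (l / b)) (k_lam a b l) / (2 * ellF (pi/2) (k_lam a b l)))"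
  proof (intro continuous_intros ballI)
    show "continuous_on {0..<b} (\<lambda>l. ellF (arcsin (l / b)) (k_lam a b l))"
    proof (rule cont)
      show "continuous_on {0..<b} (\<lambda>l. arcsin (l / b))"
        using ab by (intro continuous_on_arcsin continuous_intros) (auto simp: field_simps)
      show "0 \<le> arcsin (l / b)" if "l \<in> {0..<b}" for l
        using that ab arcsin_le_mono[of 0 "l / b"] by simp
    qed
    show "continuous_on {0..<b} (\<lambda>l. ellF (pi / 2) (k_lam a b l))"
      by (rule cont) simp_all
    show "2 * ellF (pi / 2) (k_lam a b l) \<noteq> 0" if "l \<in> {0..<b}" for l
      using ellK_pos[of "k_lam a b l"] k[OF that] by (simp add: ellK_def abs_less_iff)
  qed
  then show ?thesis by (simp add: omega_lam_def[abs_def] ellK_def)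
qed

lemma ellK_unbounded:
  fixes k0 M :: real
  assumes "0 \<le> k0" "k0 < 1"
  shows "\<exists>k. k0 < k \<and> k < 1 \<and> M < ellK k"
proof -
  define kt where "kt = tanh (\<bar>M\<bar> + 1)"
  have kt: "0 < kt" "kt < 1" unfolding kt_def by (simp_all add: tanh_real_pos_iff tanh_real_lt_1)
  define k where "k = max kt ((1 + k0) / 2)"
  have k: "k0 < k" "k < 1" "kt \<le> k"
    using assms kt by (auto simp: k_def less_max_iff_disj max_less_iff_conj)
  have "M < artanh kt" by (simp add: kt_def artanh_tanh_real)
  also have "\<dots> \<le> ellK kt" using kt by (rule artanh_le_ellK)
  also have "\<dots> \<le> ellK k"
  proof (cases "kt = k")
    case False
    then show ?thesis using k kt by (intro less_imp_le ellK_strict_mono) auto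
  qed simp
  finally show ?thesis using k by blast
qed

lemma omega_lam_exceeds_one_third:
  fixes a b :: real
  assumes ab: "0 < b" "b < a"
  shows "\<exists>l. 0 < l \<and> l < b \<and> 1/3 < omega_lam a b l"
proof -
  define e where "e = sqrt (1 - b\<^sup>2 / a\<^sup>2)"
  have e: "0 < e" "e < 1" using eccentricity_bounds[OF ab] by (simp_all add: e_def)
  obtain k where k: "e < k" "k < 1" "3 * ellK e < ellK k"
    using ellK_unbounded[of e "3 * ellK e"] e by auto
  obtain l where l: "0 < l" "l < b" "k_lam a b l = k"
    using k_lam_surj[OF ab] k by (auto simp: e_def)
  have "ellF (arcsin (e / k)) k \<le> ellF (arcsin (e / e)) e"
    using e k by (intro ellF_arcsin_antimono) auto
  then have "ellF (arcsin (e / k)) k / (2 * ellK k) < 1/6"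
    using e k ellK_pos[of e] by (simp add: ellK_def field_simps)
  then have "1/3 < omega_lam a b l"
    using omega_lam_complement[OF ab l(1,2)] by (simp add: l(3) e_def)
  then show ?thesis using l by blast
qed

lemma lam_q_spec:
  fixes a b :: real and q :: nat
  assumes ab: "0 < b" "b < a" and q: "3 \<le> q"
  shows "0 < lam_q a b q \<and> lam_q a b q < b \<and> omega_lam a b (lam_q a b q) = 1 / real q"
proof -
  let ?P = "\<lambda>l. 0 < l \<and> l < b \<and> omega_lam a b l = 1 / real q"
  obtain l2 where l2: "0 < l2" "l2 < b" "1/3 < omega_lam a b l2"
    using omega_lam_exceeds_one_third[OF ab] by blast
  have q_range: "0 < 1 / real q" "1 / real q \<le> 1/3" using q by (auto simp: field_simps)
  have omega_0: "omega_lam a b 0 = 0" by (simp add: omega_lam_def)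
  moreover have "continuous_on {0..l2} (omega_lam a b)"
    using l2 by (intro continuous_on_subset[OF continuous_on_omega_lam[OF ab]]) auto
  ultimately obtain l where l: "0 \<le> l" "l \<le> l2" "omega_lam a b l = 1 / real q"
    using IVT'[of "omega_lam a b" 0 "1 / real q" l2] q_range l2 by auto
  then have "l \<noteq> 0" using omega_0 q_range by auto
  then have P: "?P l" using l l2 by auto
  have "y = l" if "?P y" for y
    using omega_lam_strict_mono[OF ab, of y l] omega_lam_strict_mono[OF ab, of l y] that P
    by (cases y l rule: linorder_cases) auto
  with P show ?thesis unfolding lam_q_def by (rule theI)
qed

lemma lam_q_strict_antimono:
  fixes a b :: real and j m :: nat
  assumes ab: "0 < b" "b < a" and jm: "3 \<le> j" "j < m"
  shows "lam_q a b m < lam_q a b j"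
proof (rule ccontr)
  assume "\<not> lam_q a b m < lam_q a b j"
  then have "omega_lam a b (lam_q a b j) \<le> omega_lam a b (lam_q a b m)"
    using omega_lam_strict_mono[OF ab, of "lam_q a b j" "lam_q a b m"]
      lam_q_spec[OF ab, of j] lam_q_spec[OF ab, of m] jm
    by (cases "lam_q a b j = lam_q a b m") auto
  then have "1 / real j \<le> 1 / real m" using lam_q_spec[OF ab, of j] lam_q_spec[OF ab, of m] jm by simp
  then show False using jm by (simp add: divide_le_eq_1 field_simps)
qed

lemma k_q_bounds:
  fixes a b :: real and q :: nat
  assumes ab: "0 < b" "b < a" and q: "3 \<le> q"
  shows "sqrt (1 - b\<^sup>2 / a\<^sup>2) < k_q a b q" "k_q a b q < 1"
  using lam_q_spec[OF ab q] eccentricity_less_k_lam[OF ab] k_lam_bounds[OF ab]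
  by (auto simp: k_q_def)

lemma k_q_strict_antimono:
  fixes a b :: real and j m :: nat
  assumes ab: "0 < b" "b < a" and jm: "3 \<le> j" "j < m"
  shows "k_q a b m < k_q a b j"
  unfolding k_q_def using lam_q_spec[OF ab, of j] lam_q_spec[OF ab, of m] jm
  by (intro k_lam_strict_mono[OF ab] lam_q_strict_antimono[OF ab]) auto

text \<open>The integrand of \<open>\<sigma>\<^sub>k\<close> is at least its value \<open>1 / sqrt (1 - k\<^sup>2)\<close> at \<open>t = 0\<close>; the hypothesis
  \<open>k < kj\<close> keeps \<open>k cosh t < 1\<close> on \<open>[0, rho kj]\<close>.\<close>
lemma sigma_lower_bound:
  fixes k kj :: real
  assumes k: "0 \<le> k" "k < kj" "kj < 1"
  shows "rho kj * (pi / (2 * (ellK k * sqrt (1 - k\<^sup>2)))) \<le> sigma k (rho kj)"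
proof -
  define r where "r = rho kj"
  have r: "0 < r" "cosh r = 1 / kj" using k by (simp_all add: r_def rho_def)
  have bnd: "1 - k\<^sup>2 * (cosh t)\<^sup>2 \<le> 1 - k\<^sup>2 \<and> 0 < 1 - k\<^sup>2 * (cosh t)\<^sup>2" if "t \<in> {0..r}" for t
  proof -
    have "cosh t \<le> 1 / kj" using that r by (simp add: cosh_real_nonneg_le_iff flip: r(2))
    then have "k * cosh t \<le> k * (1 / kj)" using k by (intro mult_left_mono) auto
    also have "\<dots> < 1" using k by simp
    finally have "(k * cosh t)\<^sup>2 < 1" using k by (simp add: abs_square_less_1)
    moreover have "1 \<le> (cosh t)\<^sup>2" using cosh_real_ge_1[of t] by (simp add: one_le_power)
    then have "k\<^sup>2 \<le> (k * cosh t)\<^sup>2" by (simp add: power_mult_distrib mult_le_cancel_left1)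
    ultimately show ?thesis by (simp add: power_mult_distrib)
  qed
  define g where "g = (\<lambda>t. 1 / sqrt (1 - k\<^sup>2 * (cosh t)\<^sup>2))"
  have "sqrt (1 - k\<^sup>2 * (cosh t)\<^sup>2) \<noteq> 0" if "t \<in> {0..r}" for t
    using bnd[OF that] by simp
  then have "continuous_on {0..r} g" unfolding g_def by (intro continuous_intros ballI)
  then have "integral {0..r} (\<lambda>t. 1 / sqrt (1 - k\<^sup>2)) \<le> integral {0..r} g"
    using bnd by (intro integral_le integrable_continuous_real)
      (auto simp: g_def frac_le)
  then have I: "r / sqrt (1 - k\<^sup>2) \<le> integral {0..r} g" using r by simp
  have pos: "0 < ellK k" "0 < sqrt (1 - k\<^sup>2)"
    using k ellK_pos[of k] ell_radicand_bounds(1)[of k] by auto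
  have "r * (pi / (2 * (ellK k * sqrt (1 - k\<^sup>2)))) = 2 * pi / (4 * ellK k) * (r / sqrt (1 - k\<^sup>2))"
    using pos by (simp add: field_simps)
  also have "\<dots> \<le> 2 * pi / (4 * ellK k) * integral {0..r} g"
    using I pos by (intro mult_left_mono) auto
  finally show ?thesis by (simp add: sigma_def g_def r_def)
qed

definition kappa :: "real \<Rightarrow> real" where
  "kappa k = (pi / (2 * (ellK k * sqrt (1 - k\<^sup>2))) - 1) / 2"

lemma kappa_pos: "0 < k \<Longrightarrow> k < 1 \<Longrightarrow> 0 < kappa k"
  using ellK_mult_sqrt_less_pi_half[of k] ellK_pos[of k] ell_radicand_bounds(1)[of k]
  by (simp add: kappa_def field_simps)

lemma kappa_mono:
  fixes e k :: real
  assumes "0 < e" "e \<le> k" "k < 1"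
  shows "kappa e \<le> kappa k"
proof -
  have "0 < ellK k * sqrt (1 - k\<^sup>2)"
    using assms ellK_pos[of k] ell_radicand_bounds(1)[of k] by simp
  with ellK_mult_sqrt_antimono[of e k] assms show ?thesis
    unfolding kappa_def by (simp add: frac_le)
qed

lemma rho_less_sigma_minus_kappa:
  fixes k kj :: real
  assumes "0 < k" "k < kj" "kj < 1"
  shows "rho kj < sigma k (rho kj) - rho kj * kappa k"
proof -
  define \<beta> where "\<beta> = pi / (2 * (ellK k * sqrt (1 - k\<^sup>2)))"
  have "2 * kappa k = \<beta> - 1" by (simp add: kappa_def \<beta>_def)
  moreover have "0 < kappa k" using assms by (intro kappa_pos) auto
  ultimately have "1 + kappa k < \<beta>" by linarith
  moreover have "0 < rho kj" using assms by (simp add: rho_def)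
  ultimately have "rho kj * (1 + kappa k) < rho kj * \<beta>" by simp
  with sigma_lower_bound[of k kj] assms show ?thesis by (simp add: algebra_simps \<beta>_def)
qed

theorem proposition9:
  fixes a b :: real
  assumes "0 < b" and "b \<le> a"
  defines "e0 \<equiv> sqrt (1 - b\<^sup>2 / a\<^sup>2)"
  assumes "0 < e0" and "e0 < 1"
  shows "\<exists>(\<kappa>::nat \<Rightarrow> real) \<kappa>star.
           0 < \<kappa>star \<and> decseq \<kappa> \<and> (\<forall>m. \<kappa>star \<le> \<kappa> m) \<and>
           (\<forall>m j. 3 \<le> j \<and> j < m \<longrightarrow>
              rho (k_q a b j) < sigma (k_q a b m) (rho (k_q a b j)) - rho (k_q a b j) * \<kappa> m) \<and>
           (\<forall>j. 3 \<le> j \<longrightarrow>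
              rho (k_q a b j) < sigma e0 (rho (k_q a b j)) - rho (k_q a b j) * \<kappa>star)"
proof -
  have "b \<noteq> a" using \<open>0 < e0\<close> \<open>0 < b\<close> by (auto simp: e0_def)
  then have ab: "0 < b" "b < a" using assms(1,2) by auto
  have kq: "e0 < k_q a b q" "k_q a b q < 1" if "3 \<le> q" for q
    using k_q_bounds[OF ab that] by (simp_all add: e0_def)
  have kq_antimono: "k_q a b m \<le> k_q a b j" if "3 \<le> j" "j \<le> m" for j m
    using k_q_strict_antimono[OF ab, of j m] that by (cases "j = m") auto
  define \<kappa> where "\<kappa> m = kappa (k_q a b (max m 3))" for m
  have "decseq \<kappa>"
    unfolding decseq_def \<kappa>_def using kq \<open>0 < e0\<close>
    by (auto intro!: kappa_mono kq_antimono order.strict_trans[OF \<open>0 < e0\<close>])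
  moreover have "kappa e0 \<le> \<kappa> m" for m
    unfolding \<kappa>_def using kq[of "max m 3"] \<open>0 < e0\<close> by (intro kappa_mono) auto
  moreover have "rho (k_q a b j) < sigma (k_q a b m) (rho (k_q a b j)) - rho (k_q a b j) * \<kappa> m"
    if "3 \<le> j" "j < m" for j m
    using that kq[of j] kq[of m] k_q_strict_antimono[OF ab that] \<open>0 < e0\<close>
    by (auto simp: \<kappa>_def max_def intro!: rho_less_sigma_minus_kappa)
  moreover have "rho (k_q a b j) < sigma e0 (rho (k_q a b j)) - rho (k_q a b j) * kappa e0"
    if "3 \<le> j" for j
    using kq[OF that] \<open>0 < e0\<close> by (intro rho_less_sigma_minus_kappa)
  ultimately show ?thesis using kappa_pos[OF \<open>0 < e0\<close> \<open>e0 < 1\<close>] by blast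
qed

end
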